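(* If $G$ is an $n$-vertex graph with minimum degree at least $n/2$, then $rc(G)\le 3$.
   Context: All graphs are finite, simple and undirected. An edge-colored graph is rainbow connected if every two vertices are connected by a path whose edges have pairwise distinct colors. The rainbow connection $rc(G)$ of a connected graph $G$ is the smallest number of colors in an edge coloring making $G$ rainbow connected. *)

theory Defs
  imports Main
begin

definition simple_graph :: "'a set \<Rightarrow> 'a set set \<Rightarrow> bool" where
  "simple_graph V E \<longleftrightarrow> finite V \<and> (\<forall>e\<in>E. e \<subseteq> V \<and> card e = 2)"

definition degree :: "'a set set \<Rightarrow> 'a \<Rightarrow> nat" where
  "degree E v = card {e\<in>E. v \<in> e}"

fun path_edges :: "'a list \<Rightarrow> 'a set list" where
  "path_edges (x # y # xs) = {x, y} # path_edges (y # xs)"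
| "path_edges _ = []"

definition is_path :: "'a set \<Rightarrow> 'a set set \<Rightarrow> 'a list \<Rightarrow> 'a \<Rightarrow> 'a \<Rightarrow> bool" where
  "is_path V E p u v \<longleftrightarrow> p \<noteq> [] \<and> hd p = u \<and> last p = v \<and> distinct p
     \<and> set p \<subseteq> V \<and> set (path_edges p) \<subseteq> E"

definition connected_graph :: "'a set \<Rightarrow> 'a set set \<Rightarrow> bool" where
  "connected_graph V E \<longleftrightarrow> (\<forall>u\<in>V. \<forall>v\<in>V. \<exists>p. is_path V E p u v)"

definition rainbow_connected :: "'a set \<Rightarrow> 'a set set \<Rightarrow> ('a set \<Rightarrow> nat) \<Rightarrow> bool" where
  "rainbow_connected V E c \<longleftrightarrow>
     (\<forall>u\<in>V. \<forall>v\<in>V. \<exists>p. is_path V E p u v \<and> distinct (map c (path_edges p)))"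

text \<open>Rainbow connection number: least k such that some colouring of the edges with
  colours from {0..<k} is rainbow connected (defined for connected graphs).\<close>
definition rc :: "'a set \<Rightarrow> 'a set set \<Rightarrow> nat" where
  "rc V E = (LEAST k. \<exists>c. (\<forall>e\<in>E. c e < k) \<and> rainbow_connected V E c)"

end

theory Submission
  imports Defs
begin

text \<open>
  Orient the edges of a maximum matching \<open>M\<close>, so that the matched vertices split into
  tails and heads. The degree condition leaves at most one vertex unmatched: all the at least
  \<open>n/2\<close> neighbours of two unmatched vertices \<open>u\<close>, \<open>v\<close> are matched, so counting shows that
  some matching edge \<open>(x, y)\<close> has \<open>x\<close> adjacent to \<open>u\<close> and \<open>y\<close> to \<open>v\<close> (or the reverse),
  and \<open>u x y v\<close> is an augmenting path. Colour the edges of \<open>M\<close> with 2, and every other edge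
  with 1 or 0 according as exactly one of its endpoints is a head or not.
  Non-adjacent vertices have at least two common neighbours. If \<open>u\<close> and \<open>v\<close> are on opposite
  sides (head or not), the two edges through any common neighbour get distinct colours. If
  they are on the same side, one of them, say \<open>u\<close>, is matched to some \<open>u'\<close> on the other side,
  and \<open>u u' v\<close> or \<open>u u' w v\<close>, with \<open>w\<close> a common neighbour of \<open>u'\<close> and \<open>v\<close> other than the
  mate of \<open>v\<close>, is rainbow.
\<close>

lemma path_edges_append_two: "path_edges (xs @ [y, z]) = path_edges (xs @ [y]) @ [{y, z}]"
  by (induction xs rule: path_edges.induct) auto

lemma path_edges_rev: "path_edges (rev p) = rev (path_edges p)"
proof (induction p rule: path_edges.induct)
  case (1 x y xs)
  have "path_edges (rev (x # y # xs)) = path_edges (rev xs @ [y, x])" by simp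
  also have "\<dots> = path_edges (rev xs @ [y]) @ [{y, x}]" by (rule path_edges_append_two)
  also have "\<dots> = rev (path_edges (x # y # xs))" using 1 by (simp add: insert_commute)
  finally show ?case .
qed auto

lemma is_path_rev: "is_path V E p u v \<Longrightarrow> is_path V E (rev p) v u"
  unfolding is_path_def by (auto simp: path_edges_rev hd_rev last_rev)

definition rainbow_path ::
  "'a set \<Rightarrow> 'a set set \<Rightarrow> ('a set \<Rightarrow> nat) \<Rightarrow> 'a list \<Rightarrow> 'a \<Rightarrow> 'a \<Rightarrow> bool" where
  "rainbow_path V E c p u v \<longleftrightarrow> is_path V E p u v \<and> distinct (map c (path_edges p))"

lemma rainbow_path_rev: "rainbow_path V E c p u v \<Longrightarrow> rainbow_path V E c (rev p) v u"
  unfolding rainbow_path_def by (simp add: is_path_rev path_edges_rev rev_map[symmetric])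

lemma rainbow_connected_iff_rainbow_paths:
  "rainbow_connected V E c \<longleftrightarrow> (\<forall>u\<in>V. \<forall>v\<in>V. \<exists>p. rainbow_path V E c p u v)"
  unfolding rainbow_connected_def rainbow_path_def ..

lemma rainbow_connected_imp_connected: "rainbow_connected V E c \<Longrightarrow> connected_graph V E"
  unfolding rainbow_connected_def connected_graph_def by blast

lemma rc_le_if_rainbow_connected:
  assumes "\<forall>e\<in>E. c e < k" and "rainbow_connected V E c"
  shows "rc V E \<le> k"
  unfolding rc_def using assms by (intro Least_le) blast

definition neighbours :: "'a set set \<Rightarrow> 'a \<Rightarrow> 'a set" where
  "neighbours E x = {y. {x, y} \<in> E}"

text \<open>A matching whose edges are stored as ordered pairs: the orientation splits the
  matched vertices into tails \<open>fst ` M\<close> and heads \<open>snd ` M\<close>.\<close>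
definition oriented_matching :: "'a set set \<Rightarrow> ('a \<times> 'a) set \<Rightarrow> bool" where
  "oriented_matching E M \<longleftrightarrow> (\<forall>p\<in>M. {fst p, snd p} \<in> E) \<and> inj_on fst M \<and> inj_on snd M
     \<and> fst ` M \<inter> snd ` M = {}"

definition matched :: "('a \<times> 'a) set \<Rightarrow> 'a set" where
  "matched M = fst ` M \<union> snd ` M"

definition mate :: "('a \<times> 'a) set \<Rightarrow> 'a \<Rightarrow> 'a \<Rightarrow> bool" where
  "mate M x y \<longleftrightarrow> (x, y) \<in> M \<or> (y, x) \<in> M"

lemma mate_sym: "mate M x y \<Longrightarrow> mate M y x"
  unfolding mate_def by auto

lemma mate_unique:
  assumes M: "oriented_matching E M" and "mate M x y" "mate M x z"
  shows "y = z"
proof -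
  have inj: "inj_on fst M" "inj_on snd M" and disj: "fst ` M \<inter> snd ` M = {}"
    using M unfolding oriented_matching_def by auto
  have same_tail: "y = z" if "(x, y) \<in> M" "(x, z) \<in> M" for y z
    using inj_onD[OF inj(1) _ that] by simp
  have same_head: "y = z" if "(y, x) \<in> M" "(z, x) \<in> M" for y z
    using inj_onD[OF inj(2) _ that] by simp
  have not_tail_and_head: False if "(x, y) \<in> M" "(z, x) \<in> M" for y z
    using disj that by (metis disjoint_iff fst_conv snd_conv image_eqI)
  show ?thesis
    using assms(2,3) same_tail same_head not_tail_and_head unfolding mate_def by blast
qed

lemma mate_edge: "oriented_matching E M \<Longrightarrow> mate M x y \<Longrightarrow> {x, y} \<in> E"
  unfolding oriented_matching_def mate_def by (auto simp: insert_commute)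

lemma mate_opposite_sides:
  "oriented_matching E M \<Longrightarrow> mate M x y \<Longrightarrow> (x \<in> snd ` M) \<noteq> (y \<in> snd ` M)"
  unfolding oriented_matching_def mate_def by force

lemma ex_mate: "x \<in> matched M \<Longrightarrow> \<exists>y. mate M x y"
  unfolding matched_def mate_def by force

lemma matched_insert: "matched (insert (a, b) M) = insert a (insert b (matched M))"
  unfolding matched_def by (simp add: insert_commute)

lemma oriented_matching_insert:
  assumes "oriented_matching E M" "a \<notin> matched M" "b \<notin> matched M" "a \<noteq> b" "{a, b} \<in> E"
  shows "oriented_matching E (insert (a, b) M)"
  using assms unfolding oriented_matching_def matched_def inj_on_def by auto

lemma oriented_matching_Diff: "oriented_matching E M \<Longrightarrow> oriented_matching E (M - N)"
  unfolding oriented_matching_def by (auto intro: inj_on_subset[OF _ Diff_subset])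

lemma matched_Diff_pair:
  assumes M: "oriented_matching E M" and xy: "(x, y) \<in> M"
  shows "matched (M - {(x, y)}) = matched M - {x, y}"
proof
  have inj: "inj_on fst M" "inj_on snd M" and disj: "fst ` M \<inter> snd ` M = {}"
    using M unfolding oriented_matching_def by auto
  show "matched (M - {(x, y)}) \<subseteq> matched M - {x, y}"
  proof
    fix z assume "z \<in> matched (M - {(x, y)})"
    then obtain p where p: "p \<in> M" "p \<noteq> (x, y)" "z = fst p \<or> z = snd p"
      unfolding matched_def by auto
    have "fst p \<noteq> x"
      using inj_onD[OF inj(1), of p "(x, y)"] p xy by auto
    moreover have "snd p \<noteq> y"
      using inj_onD[OF inj(2), of p "(x, y)"] p xy by auto
    moreover have "fst p \<noteq> y" "snd p \<noteq> x"
      using disj p(1) xy by (metis disjoint_iff fst_conv snd_conv image_eqI)+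
    ultimately show "z \<in> matched M - {x, y}"
      using p unfolding matched_def by auto
  qed
qed (auto simp: matched_def)

lemma card_matched:
  assumes "oriented_matching E M" "finite M"
  shows "card (matched M) = 2 * card M"
proof -
  have "inj_on fst M" "inj_on snd M" "fst ` M \<inter> snd ` M = {}"
    using assms(1) unfolding oriented_matching_def by auto
  then show ?thesis
    unfolding matched_def using assms(2) by (simp add: card_Un_disjoint card_image)
qed

lemma card_subset_matched:
  assumes M: "oriented_matching E M" "finite M" and A: "A \<subseteq> matched M"
  shows "card A = card {p\<in>M. fst p \<in> A} + card {p\<in>M. snd p \<in> A}"
proof -
  have inj: "inj_on fst M" "inj_on snd M" and disj: "fst ` M \<inter> snd ` M = {}"
    using M(1) unfolding oriented_matching_def by auto
  have "inj_on fst {p\<in>M. fst p \<in> A}" "inj_on snd {p\<in>M. snd p \<in> A}"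
    using inj_on_subset[OF inj(1), of "{p\<in>M. fst p \<in> A}"]
      inj_on_subset[OF inj(2), of "{p\<in>M. snd p \<in> A}"] by auto
  moreover have "fst ` {p\<in>M. fst p \<in> A} = A \<inter> fst ` M" "snd ` {p\<in>M. snd p \<in> A} = A \<inter> snd ` M"
    by auto
  ultimately have filters: "card {p\<in>M. fst p \<in> A} = card (A \<inter> fst ` M)"
    "card {p\<in>M. snd p \<in> A} = card (A \<inter> snd ` M)"
    using card_image by fastforce+
  have "A = (A \<inter> fst ` M) \<union> (A \<inter> snd ` M)"
    using A unfolding matched_def by auto
  then have "card A = card ((A \<inter> fst ` M) \<union> (A \<inter> snd ` M))"
    by (rule arg_cong)
  also have "\<dots> = card (A \<inter> fst ` M) + card (A \<inter> snd ` M)"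
    using disj M(2) by (intro card_Un_disjoint) auto
  finally show ?thesis
    unfolding filters .
qed

text \<open>Each matching edge contributes at most two to \<open>card A + card B\<close>.\<close>
lemma card_le_twice_matching:
  assumes M: "oriented_matching E M" "finite M"
    and sub: "A \<subseteq> matched M" "B \<subseteq> matched M"
    and AB: "\<forall>p\<in>M. \<not> (fst p \<in> A \<and> snd p \<in> B)"
    and BA: "\<forall>p\<in>M. \<not> (fst p \<in> B \<and> snd p \<in> A)"
  shows "card A + card B \<le> 2 * card M"
proof -
  have disjoint_filters: "card {p\<in>M. P p} + card {p\<in>M. Q p} \<le> card M"
    if "\<forall>p\<in>M. \<not> (P p \<and> Q p)" for P Q
  proof -
    have "card {p\<in>M. P p} + card {p\<in>M. Q p} = card ({p\<in>M. P p} \<union> {p\<in>M. Q p})"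
      using M(2) that by (intro card_Un_disjoint[symmetric]) auto
    also have "\<dots> \<le> card M"
      using M(2) by (intro card_mono) auto
    finally show ?thesis .
  qed
  have "card {p\<in>M. fst p \<in> A} + card {p\<in>M. snd p \<in> B} \<le> card M"
    "card {p\<in>M. fst p \<in> B} + card {p\<in>M. snd p \<in> A} \<le> card M"
    using AB BA by (intro disjoint_filters; blast)+
  then show ?thesis
    using card_subset_matched[OF M sub(1)] card_subset_matched[OF M sub(2)] by linarith
qed

definition matching_colouring :: "('a \<times> 'a) set \<Rightarrow> 'a set \<Rightarrow> nat" where
  "matching_colouring M e =
     (if \<exists>x y. (x, y) \<in> M \<and> e = {x, y} then 2
      else if \<exists>x y. e = {x, y} \<and> x \<in> snd ` M \<and> y \<notin> snd ` M then 1 else 0)"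

lemma matching_colouring_lt_3: "matching_colouring M e < 3"
  unfolding matching_colouring_def by auto

lemma matching_colouring_mate: "mate M x y \<Longrightarrow> matching_colouring M {x, y} = 2"
  unfolding matching_colouring_def mate_def by (auto simp: insert_commute)

lemma matching_colouring_non_mate:
  "x \<noteq> y \<Longrightarrow> \<not> mate M x y \<Longrightarrow>
    matching_colouring M {x, y} = (if (x \<in> snd ` M) = (y \<in> snd ` M) then 0 else 1)"
  unfolding matching_colouring_def mate_def by (auto simp: doubleton_eq_iff)

lemma matching_colouring_two_edges:
  assumes "x \<noteq> w" "w \<noteq> v" "\<not> mate M x w" "\<not> mate M w v" "(x \<in> snd ` M) \<noteq> (v \<in> snd ` M)"
  shows "matching_colouring M {x, w} \<noteq> matching_colouring M {w, v}"
    and "matching_colouring M {x, w} \<noteq> 2" and "matching_colouring M {w, v} \<noteq> 2"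
  using assms matching_colouring_non_mate[of x w M] matching_colouring_non_mate[of w v M]
  by auto

locale finite_simple_graph =
  fixes V :: "'a set" and E :: "'a set set"
  assumes simple_graph: "simple_graph V E"
begin

lemma finite_V: "finite V"
  using simple_graph unfolding simple_graph_def by auto

lemma edge_vertices: "{x, y} \<in> E \<Longrightarrow> x \<in> V \<and> y \<in> V \<and> x \<noteq> y"
  using simple_graph unfolding simple_graph_def by fastforce

lemma neighbours_subset: "neighbours E x \<subseteq> V - {x}"
  unfolding neighbours_def using edge_vertices by auto

lemma finite_neighbours: "finite (neighbours E x)"
  using neighbours_subset finite_V by (meson finite_Diff finite_subset)

lemma degree_eq_card_neighbours: "degree E x = card (neighbours E x)"
proof -
  have "{e\<in>E. x \<in> e} = (\<lambda>y. {x, y}) ` neighbours E x"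
  proof (intro equalityI subsetI)
    fix e assume e: "e \<in> {e\<in>E. x \<in> e}"
    then have "card e = 2" using simple_graph unfolding simple_graph_def by auto
    then obtain y where "e = {x, y}"
      using e by (auto simp: card_2_iff doubleton_eq_iff)
    then show "e \<in> (\<lambda>y. {x, y}) ` neighbours E x"
      using e unfolding neighbours_def by auto
  qed (auto simp: neighbours_def)
  moreover have "inj_on (\<lambda>y. {x, y}) (neighbours E x)"
    by (auto simp: inj_on_def doubleton_eq_iff)
  ultimately show ?thesis
    unfolding degree_def by (simp add: card_image)
qed

lemma matched_subset: "oriented_matching E M \<Longrightarrow> matched M \<subseteq> V"
  unfolding oriented_matching_def matched_def using edge_vertices by fastforce

lemma oriented_matching_subset: "oriented_matching E M \<Longrightarrow> M \<subseteq> V \<times> V"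
  using matched_subset unfolding matched_def by force

lemma finite_oriented_matching: "oriented_matching E M \<Longrightarrow> finite M"
  using oriented_matching_subset finite_V by (meson finite_SigmaI finite_subset)

lemma ex_maximum_oriented_matching:
  "\<exists>M. oriented_matching E M \<and> (\<forall>M'. oriented_matching E M' \<longrightarrow> card M' \<le> card M)"
proof -
  have "oriented_matching E {}"
    unfolding oriented_matching_def by auto
  moreover have "\<forall>M. oriented_matching E M \<longrightarrow> card M < Suc (card (V \<times> V))"
  proof (intro allI impI)
    fix M assume "oriented_matching E M"
    then have "card M \<le> card (V \<times> V)"
      using oriented_matching_subset finite_V by (intro card_mono) auto
    then show "card M < Suc (card (V \<times> V))" by simp
  qed
  ultimately show ?thesis
    by (rule ex_has_greatest_nat)
qed

lemma larger_matching_by_edge: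
  assumes M: "oriented_matching E M" and "a \<notin> matched M" "b \<notin> matched M" "{a, b} \<in> E"
  shows "\<exists>M'. oriented_matching E M' \<and> card M < card M'"
proof (intro exI conjI)
  show "oriented_matching E (insert (a, b) M)"
    using assms edge_vertices by (intro oriented_matching_insert) auto
  have "(a, b) \<notin> M"
    using assms(2) unfolding matched_def by force
  then show "card M < card (insert (a, b) M)"
    using finite_oriented_matching[OF M] by simp
qed

text \<open>Augmentation along the path \<open>u x y v\<close>.\<close>
lemma larger_matching_by_exchange:
  assumes M: "oriented_matching E M" and u: "u \<notin> matched M" and v: "v \<notin> matched M"
    and "u \<noteq> v" and xy: "(x, y) \<in> M" and ux: "{u, x} \<in> E" and vy: "{v, y} \<in> E"
  shows "\<exists>M'. oriented_matching E M' \<and> card M < card M'"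
proof -
  let ?M0 = "M - {(x, y)}"
  let ?M1 = "insert (v, y) ?M0"
  let ?M2 = "insert (u, x) ?M1"
  have M0: "oriented_matching E ?M0" and matched_M0: "matched ?M0 = matched M - {x, y}"
    using oriented_matching_Diff[OF M] matched_Diff_pair[OF M xy] by auto
  have "{x, y} \<in> E"
    using mate_edge[OF M, of x y] xy unfolding mate_def by blast
  then have "x \<noteq> y"
    using edge_vertices by blast
  moreover have "x \<in> matched M" "y \<in> matched M"
    using xy unfolding matched_def by (metis Un_iff fst_conv snd_conv image_eqI)+
  ultimately have fresh: "u \<notin> matched ?M1" "x \<notin> matched ?M1" "v \<notin> matched ?M0" "y \<notin> matched ?M0"
    using u v \<open>u \<noteq> v\<close> by (auto simp: matched_M0 matched_insert)
  have M1: "oriented_matching E ?M1"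
    using fresh vy edge_vertices by (intro oriented_matching_insert[OF M0]) auto
  have "oriented_matching E ?M2"
    using fresh ux edge_vertices by (intro oriented_matching_insert[OF M1]) auto
  moreover have "card ?M2 = card M + 1"
  proof -
    have "(v, y) \<notin> ?M0" "(u, x) \<notin> ?M1"
      using fresh(1,3) unfolding matched_def by (metis Un_iff fst_conv image_eqI)+
    then have "card ?M2 = Suc (Suc (card ?M0))"
      using card_insert_disjoint[OF finite_oriented_matching[OF M0]]
        card_insert_disjoint[OF finite_oriented_matching[OF M1]] by presburger
    then show ?thesis
      using card_Suc_Diff1[OF finite_oriented_matching[OF M] xy] by simp
  qed
  ultimately show ?thesis
    by (intro exI[of _ ?M2]) simp
qed

end

locale half_degree_graph = finite_simple_graph +
  assumes half_degree: "\<forall>v\<in>V. 2 * degree E v \<ge> card V"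
begin

lemma card_le_twice_neighbours: "x \<in> V \<Longrightarrow> card V \<le> 2 * card (neighbours E x)"
  using half_degree degree_eq_card_neighbours by auto

lemma card_V_Diff_doubleton:
  assumes "a \<in> V" "b \<in> V" "a \<noteq> b"
  shows "card (V - {a, b}) + 2 = card V"
proof -
  have "card {a, b} \<le> card V"
    using assms finite_V by (intro card_mono) auto
  then show ?thesis
    using assms finite_V by (simp add: card_Diff_subset)
qed

lemma two_le_card_common_neighbours:
  assumes "a \<in> V" "b \<in> V" "a \<noteq> b" "{a, b} \<notin> E"
  shows "2 \<le> card (neighbours E a \<inter> neighbours E b)"
proof -
  have "neighbours E a \<union> neighbours E b \<subseteq> V - {a, b}"
    using assms(4) edge_vertices unfolding neighbours_def by (auto simp: insert_commute)
  then have "card (neighbours E a \<union> neighbours E b) \<le> card (V - {a, b})"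
    using finite_V by (intro card_mono) auto
  moreover have "card (neighbours E a \<union> neighbours E b) + card (neighbours E a \<inter> neighbours E b)
      = card (neighbours E a) + card (neighbours E b)"
    using card_Un_Int[OF finite_neighbours finite_neighbours] by simp
  ultimately show ?thesis
    using card_le_twice_neighbours[OF assms(1)] card_le_twice_neighbours[OF assms(2)]
      card_V_Diff_doubleton[OF assms(1-3)] by linarith
qed

lemma ex_common_neighbour_avoiding:
  assumes "a \<in> V" "b \<in> V" "a \<noteq> b" "{a, b} \<notin> E"
  shows "\<exists>w. {a, w} \<in> E \<and> {w, b} \<in> E \<and> w \<noteq> z"
proof -
  have "\<not> neighbours E a \<inter> neighbours E b \<subseteq> {z}"
  proof
    assume "neighbours E a \<inter> neighbours E b \<subseteq> {z}"
    then have "card (neighbours E a \<inter> neighbours E b) \<le> 1"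
      using card_mono[of "{z}"] by fastforce
    with two_le_card_common_neighbours[OF assms] show False by simp
  qed
  then show ?thesis
    unfolding neighbours_def by (auto simp: insert_commute)
qed

lemma ex_common_neighbour_not_mate:
  assumes M: "oriented_matching E M" and "a \<in> V" "b \<in> V" "a \<noteq> b" "{a, b} \<notin> E"
  shows "\<exists>w. {a, w} \<in> E \<and> {w, b} \<in> E \<and> \<not> mate M w b"
proof -
  obtain w where w: "{a, w} \<in> E" "{w, b} \<in> E" "w \<noteq> (SOME z. mate M b z)"
    using ex_common_neighbour_avoiding[OF assms(2-5)] by blast
  have "\<not> mate M w b"
  proof
    assume "mate M w b"
    then have "mate M b w" by (rule mate_sym)
    moreover from this have "mate M b (SOME z. mate M b z)" by (rule someI)
    ultimately have "w = (SOME z. mate M b z)" by (rule mate_unique[OF M])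
    with w(3) show False ..
  qed
  with w show ?thesis by blast
qed

lemma maximum_matching_almost_perfect:
  assumes M: "oriented_matching E M"
    and maximum: "\<forall>M'. oriented_matching E M' \<longrightarrow> card M' \<le> card M"
    and "u \<in> V" "v \<in> V" and u: "u \<notin> matched M" and v: "v \<notin> matched M"
  shows "u = v"
proof (rule ccontr)
  assume "u \<noteq> v"
  have no_larger: "\<not> (\<exists>M'. oriented_matching E M' \<and> card M < card M')"
    using maximum by (auto simp: not_less)
  have "neighbours E u \<subseteq> matched M" "neighbours E v \<subseteq> matched M"
    using larger_matching_by_edge[OF M] u v no_larger unfolding neighbours_def by blast+
  moreover have "\<forall>p\<in>M. \<not> (fst p \<in> neighbours E u \<and> snd p \<in> neighbours E v)"
    "\<forall>p\<in>M. \<not> (fst p \<in> neighbours E v \<and> snd p \<in> neighbours E u)"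
    using larger_matching_by_exchange[OF M u v] larger_matching_by_exchange[OF M v u]
      \<open>u \<noteq> v\<close> no_larger unfolding neighbours_def by fastforce+
  ultimately have "card (neighbours E u) + card (neighbours E v) \<le> card (matched M)"
    using card_le_twice_matching[OF M finite_oriented_matching[OF M]] card_matched[OF M]
      finite_oriented_matching[OF M] by simp
  also have "\<dots> \<le> card (V - {u, v})"
    using matched_subset[OF M] u v finite_V by (intro card_mono) auto
  finally show False
    using card_le_twice_neighbours[OF \<open>u \<in> V\<close>] card_le_twice_neighbours[OF \<open>v \<in> V\<close>]
      card_V_Diff_doubleton[OF \<open>u \<in> V\<close> \<open>v \<in> V\<close> \<open>u \<noteq> v\<close>] by linarith
qed

context
  fixes M assumes M: "oriented_matching E M"
begin

lemma rainbow_path_opposite_sides: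
  assumes "u \<in> V" "v \<in> V" "u \<noteq> v" "{u, v} \<notin> E" "(u \<in> snd ` M) \<noteq> (v \<in> snd ` M)"
  shows "\<exists>p. rainbow_path V E (matching_colouring M) p u v"
proof -
  obtain w where uw: "{u, w} \<in> E" and wv: "{w, v} \<in> E" and not_mate: "\<not> mate M w v"
    using ex_common_neighbour_not_mate[OF M assms(1-4)] by blast
  have "u \<noteq> w" "w \<noteq> v" "w \<in> V"
    using edge_vertices[OF uw] edge_vertices[OF wv] by auto
  have "matching_colouring M {u, w} \<noteq> matching_colouring M {w, v}"
  proof (cases "mate M u w")
    case True
    then show ?thesis
      using matching_colouring_mate[OF True] matching_colouring_non_mate[OF \<open>w \<noteq> v\<close> not_mate]
      by simp
  next
    case False
    then show ?thesis
      by (rule matching_colouring_two_edges(1)[OF \<open>u \<noteq> w\<close> \<open>w \<noteq> v\<close> _ not_mate assms(5)])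
  qed
  then have "rainbow_path V E (matching_colouring M) [u, w, v] u v"
    using assms \<open>u \<noteq> w\<close> \<open>w \<noteq> v\<close> \<open>w \<in> V\<close> uw wv unfolding rainbow_path_def is_path_def by auto
  then show ?thesis ..
qed

lemma rainbow_path_same_side:
  assumes "u \<in> V" "v \<in> V" "u \<noteq> v" "{u, v} \<notin> E" "(u \<in> snd ` M) = (v \<in> snd ` M)"
    and mate_u: "mate M u u'"
  shows "\<exists>p. rainbow_path V E (matching_colouring M) p u v"
proof -
  have uu': "{u, u'} \<in> E" by (rule mate_edge[OF M mate_u])
  have "u' \<in> V" "u \<noteq> u'" "u' \<noteq> v"
    using edge_vertices[OF uu'] uu' assms(4) by auto
  have colour_uu': "matching_colouring M {u, u'} = 2"
    by (rule matching_colouring_mate[OF mate_u])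
  have sides: "(u' \<in> snd ` M) \<noteq> (v \<in> snd ` M)"
    using mate_opposite_sides[OF M mate_u] assms(5) by simp
  have not_mate_u': "\<not> mate M u' w" if "w \<noteq> u" for w
    using mate_unique[OF M mate_sym[OF mate_u]] that by blast
  show ?thesis
  proof (cases "{u', v} \<in> E")
    case True
    have "matching_colouring M {u', v} \<noteq> 2"
      using matching_colouring_non_mate[OF \<open>u' \<noteq> v\<close> not_mate_u'] \<open>u \<noteq> v\<close> by simp
    then have "rainbow_path V E (matching_colouring M) [u, u', v] u v"
      using assms \<open>u' \<in> V\<close> \<open>u \<noteq> u'\<close> \<open>u' \<noteq> v\<close> uu' True colour_uu'
      unfolding rainbow_path_def is_path_def by auto
    then show ?thesis ..
  next
    case False
    obtain w where u'w: "{u', w} \<in> E" and wv: "{w, v} \<in> E" and not_mate: "\<not> mate M w v"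
      using ex_common_neighbour_not_mate[OF M \<open>u' \<in> V\<close> \<open>v \<in> V\<close> \<open>u' \<noteq> v\<close> False] by blast
    have "u' \<noteq> w" "w \<noteq> v" "w \<in> V" "u \<noteq> w"
      using edge_vertices[OF u'w] edge_vertices[OF wv] wv assms(4) by auto
    then have "matching_colouring M {u', w} \<noteq> matching_colouring M {w, v}"
      "matching_colouring M {u', w} \<noteq> 2" "matching_colouring M {w, v} \<noteq> 2"
      using matching_colouring_two_edges[OF \<open>u' \<noteq> w\<close> \<open>w \<noteq> v\<close> not_mate_u' not_mate sides]
      by blast+
    then have "rainbow_path V E (matching_colouring M) [u, u', w, v] u v"
      using assms \<open>u' \<in> V\<close> \<open>u \<noteq> u'\<close> \<open>u' \<noteq> v\<close> \<open>u' \<noteq> w\<close> \<open>w \<noteq> v\<close> \<open>w \<in> V\<close> \<open>u \<noteq> w\<close>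
        uu' u'w wv colour_uu'
      unfolding rainbow_path_def is_path_def by auto
    then show ?thesis ..
  qed
qed

lemma rainbow_connected_matching_colouring:
  assumes almost_perfect: "\<forall>x\<in>V - matched M. \<forall>y\<in>V - matched M. x = y"
  shows "rainbow_connected V E (matching_colouring M)"
  unfolding rainbow_connected_iff_rainbow_paths
proof (intro ballI)
  fix u v assume "u \<in> V" "v \<in> V"
  consider "u = v" | "{u, v} \<in> E" | "u \<noteq> v" "{u, v} \<notin> E" "(u \<in> snd ` M) \<noteq> (v \<in> snd ` M)"
    | "u \<noteq> v" "{u, v} \<notin> E" "(u \<in> snd ` M) = (v \<in> snd ` M)"
    by blast
  then show "\<exists>p. rainbow_path V E (matching_colouring M) p u v"
  proof cases
    case 1
    then have "rainbow_path V E (matching_colouring M) [u] u v"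
      using \<open>u \<in> V\<close> unfolding rainbow_path_def is_path_def by auto
    then show ?thesis ..
  next
    case 2
    then have "rainbow_path V E (matching_colouring M) [u, v] u v"
      using \<open>u \<in> V\<close> \<open>v \<in> V\<close> edge_vertices unfolding rainbow_path_def is_path_def by auto
    then show ?thesis ..
  next
    case 3
    then show ?thesis
      using rainbow_path_opposite_sides \<open>u \<in> V\<close> \<open>v \<in> V\<close> by blast
  next
    case 4
    then consider "u \<in> matched M" | "v \<in> matched M"
      using almost_perfect \<open>u \<in> V\<close> \<open>v \<in> V\<close> by (metis DiffI)
    then show ?thesis
    proof cases
      case 1
      then obtain u' where "mate M u u'"
        by (blast dest: ex_mate)
      then show ?thesis
        by (rule rainbow_path_same_side[OF \<open>u \<in> V\<close> \<open>v \<in> V\<close> 4])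
    next
      case 2
      then obtain v' where "mate M v v'"
        by (blast dest: ex_mate)
      moreover have "v \<noteq> u" "{v, u} \<notin> E" "(v \<in> snd ` M) = (u \<in> snd ` M)"
        using 4 by (auto simp: insert_commute)
      ultimately obtain p where "rainbow_path V E (matching_colouring M) p v u"
        using rainbow_path_same_side[OF \<open>v \<in> V\<close> \<open>u \<in> V\<close>] by blast
      then have "rainbow_path V E (matching_colouring M) (rev p) u v"
        by (rule rainbow_path_rev)
      then show ?thesis ..
    qed
  qed
qed

end

end

theorem corollary1p5:
  fixes V :: "'a set" and E :: "'a set set"
  assumes "simple_graph V E"
    and "\<forall>v\<in>V. 2 * degree E v \<ge> card V"
  shows "connected_graph V E \<and> rc V E \<le> 3"
proof -
  interpret half_degree_graph V E
    using assms by unfold_locales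
  obtain M where M: "oriented_matching E M"
    and maximum: "\<forall>M'. oriented_matching E M' \<longrightarrow> card M' \<le> card M"
    using ex_maximum_oriented_matching by blast
  have "\<forall>x\<in>V - matched M. \<forall>y\<in>V - matched M. x = y"
    using maximum_matching_almost_perfect[OF M maximum] by blast
  then have "rainbow_connected V E (matching_colouring M)"
    by (rule rainbow_connected_matching_colouring[OF M])
  then show ?thesis
    using rainbow_connected_imp_connected rc_le_if_rainbow_connected matching_colouring_lt_3
    by blast
qed

end
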